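(* Let $F$ be an algebraically closed field of positive characteristic $p$, and let $\phi \in F(z)$ be a unicritical rational function. Then $\deg(\phi) \equiv 0$ or $1 \pmod p$.
   Context: A rational function $\phi \in F(z)$ is unicritical if it is nonconstant and has exactly one critical point in $\mathbb{P}^1(F)$. Critical points: for $x \in F$, choose a fractional linear transformation $\sigma$ over $F$ with $\sigma(\phi(x)) \neq \infty$; $x$ is a critical point if $\frac{d(\sigma\circ\phi)}{dz}(x) = 0$; $\infty$ is a critical point if $\frac{d(\sigma \circ \phi(1/z))}{dz}\big|_{z=0} = 0$ for such $\sigma$ with $\sigma(\phi(\infty))\neq\infty$. The degree of $\phi = f/g$ with $f,g$ coprime is $\max(\deg f, \deg g)$. *)

theory Defs
  imports "HOL-Computational_Algebra.Computational_Algebra"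
begin

text \<open>A rational function phi in F(z) is represented as phi = f/g with f, g coprime
  polynomials and g \<noteq> 0 (every element of F(z) has such a representation).\<close>

definition rat_degree :: "'a::field poly \<Rightarrow> 'a poly \<Rightarrow> nat" where
  "rat_degree f g = max (degree f) (degree g)"

definition rat_nonconstant :: "'a::field poly \<Rightarrow> 'a poly \<Rightarrow> bool" where
  "rat_nonconstant f g \<longleftrightarrow> \<not> (\<exists>c. f = smult c g)"

text \<open>Fractional linear transformations sigma(w) = (a w + b)/(c w + d) with ad - bc \<noteq> 0,
  encoded by their coefficients (a, b, c, d).\<close>
definition flt :: "'a::field \<Rightarrow> 'a \<Rightarrow> 'a \<Rightarrow> 'a \<Rightarrow> bool" where
  "flt a b c d \<longleftrightarrow> a * d - b * c \<noteq> 0"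

text \<open>Critical point criterion for a rational function given as a quotient N/D of coprime
  polynomials, at a point x in F: choose sigma = (a,b,c,d) with sigma(N(x):D(x)) \<noteq> \<infinity>,
  i.e. c N(x) + d D(x) \<noteq> 0; then sigma o (N/D) = (a N + b D)/(c N + d D) and its
  derivative at x vanishes iff P'(x) Q(x) - P(x) Q'(x) = 0 with P = aN+bD, Q = cN+dD.\<close>
definition crit_at_quot :: "'a::field poly \<Rightarrow> 'a poly \<Rightarrow> 'a \<Rightarrow> bool" where
  "crit_at_quot N D x \<longleftrightarrow>
     (\<exists>a b c d. flt a b c d \<and>
        (let P = smult a N + smult b D; Q = smult c N + smult d D in
          poly Q x \<noteq> 0 \<and>
          poly (pderiv P) x * poly Q x - poly P x * poly (pderiv Q) x = 0))"

definition rev_poly :: "nat \<Rightarrow> 'a::field poly \<Rightarrow> 'a poly" where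
  "rev_poly n p = (\<Sum>i\<le>n. monom (coeff p i) (n - i))"

text \<open>Critical points in P^1(F), with P^1(F) encoded as 'a option (None = \<infinity>).
  At \<infinity> we use phi(1/z) = (z^n f(1/z)) / (z^n g(1/z)), n = deg phi, evaluated at z = 0.\<close>
definition critical_point :: "'a::field poly \<Rightarrow> 'a poly \<Rightarrow> 'a option \<Rightarrow> bool" where
  "critical_point f g P = (case P of
      Some x \<Rightarrow> crit_at_quot f g x
    | None \<Rightarrow> crit_at_quot (rev_poly (rat_degree f g) f) (rev_poly (rat_degree f g) g) 0)"

definition unicritical :: "'a::field poly \<Rightarrow> 'a poly \<Rightarrow> bool" where
  "unicritical f g \<longleftrightarrow> rat_nonconstant f g \<and> (\<exists>!P. critical_point f g P)"

end

theory Submission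
  imports Defs
begin

text \<open>Write \<open>\<phi> = f/g\<close> with \<open>n = deg \<phi> \<ge> 2\<close> and let \<open>W = f' g - f g'\<close> be the Wronskian.
  Composing \<open>\<phi>\<close> with a Moebius map only rescales \<open>W\<close>, so the finite critical points are the
  roots of \<open>W\<close>; moreover \<open>deg W \<le> 2n - 2\<close>, with strict inequality exactly when \<open>\<infinity>\<close> is critical.
  If \<open>\<infinity>\<close> is the only critical point, \<open>W\<close> is constant, so \<open>f'' g = f g''\<close>; coprimality and a
  degree count force \<open>f'' = g'' = 0\<close>, and the coefficient of \<open>z^n\<close> gives \<open>n(n-1) = 0\<close> in \<open>F\<close>.
  If the only critical point is \<open>x\<^sub>0 \<in> F\<close>, then \<open>W = c (z - x\<^sub>0)^(2n-2)\<close>, and the Cauchy-Euler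
  operator \<open>A h = (z - x\<^sub>0)^2 h'' - (2n-2)(z - x\<^sub>0) h' + n(n-1) h\<close> satisfies \<open>(A f) g = f (A g)\<close>.
  Since \<open>A\<close> lowers degrees, again \<open>A f = A g = 0\<close>, and evaluating at \<open>x\<^sub>0\<close> gives \<open>n(n-1) = 0\<close>.\<close>

lemma mod_CHAR_eq_0_or_1:
  assumes "of_nat n * (of_nat n - 1) = (0::'a::field)"
  shows "n mod CHAR('a) = 0 \<or> n mod CHAR('a) = 1"
proof (cases n)
  case (Suc k)
  with assms have "of_nat n = (0::'a) \<or> of_nat k = (0::'a)"
    by simp
  then have "CHAR('a) dvd n \<or> CHAR('a) dvd k"
    by (simp add: of_nat_eq_0_iff_char_dvd)
  with Suc show ?thesis
    by (auto simp: mod_Suc dvd_eq_mod_eq_0)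
qed simp

lemma degree_pderiv_le: "degree (pderiv p) \<le> degree p - 1"
  by (rule degree_le) (auto simp: coeff_pderiv coeff_eq_0)

lemma degree_le_if_coeff_Suc_eq_0:
  assumes "degree p \<le> Suc n" "coeff p (Suc n) = 0"
  shows "degree p \<le> n"
proof (rule ccontr)
  assume "\<not> degree p \<le> n"
  with assms(1) have "degree p = Suc n"
    by simp
  with assms(2) show False
    by (metis leading_coeff_0_iff degree_0 nat.distinct(1))
qed

lemma coeff_mult_at_degree_bounds:
  fixes p q :: "'a::comm_semiring_0 poly"
  assumes "degree p \<le> a" "degree q \<le> b"
  shows "coeff (p * q) (a + b) = coeff p a * coeff q b"
proof -
  have "coeff (p * q) (a + b) = (\<Sum>i\<in>{a}. coeff p i * coeff q (a + b - i))"
    unfolding coeff_mult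
  proof (rule sum.mono_neutral_right)
    show "\<forall>i\<in>{..a + b} - {a}. coeff p i * coeff q (a + b - i) = 0"
    proof
      fix i assume "i \<in> {..a + b} - {a}"
      then have "i < a \<or> i > a"
        by auto
      then show "coeff p i * coeff q (a + b - i) = 0"
        using assms by (auto simp: coeff_eq_0)
    qed
  qed auto
  then show ?thesis
    by simp
qed

lemma coeff_mult_below_degree_bounds:
  fixes p q :: "'a::comm_semiring_0 poly"
  assumes "degree p \<le> Suc a" "degree q \<le> Suc b"
  shows "coeff (p * q) (Suc (a + b)) = coeff p a * coeff q (Suc b) + coeff p (Suc a) * coeff q b"
proof -
  have "coeff (p * q) (Suc (a + b)) = (\<Sum>i\<in>{a, Suc a}. coeff p i * coeff q (Suc (a + b) - i))"
    unfolding coeff_mult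
  proof (rule sum.mono_neutral_right)
    show "\<forall>i\<in>{..Suc (a + b)} - {a, Suc a}. coeff p i * coeff q (Suc (a + b) - i) = 0"
    proof
      fix i assume "i \<in> {..Suc (a + b)} - {a, Suc a}"
      then have "i < a \<or> i > Suc a"
        by auto
      then show "coeff p i * coeff q (Suc (a + b) - i) = 0"
        using assms by (auto simp: coeff_eq_0)
    qed
  qed auto
  then show ?thesis
    by simp
qed

text \<open>The library's \<open>coprime_dvd_mult_left_iff\<close> needs a gcd structure on \<open>'a poly\<close>, which an
  arbitrary field does not provide; algebraic closedness lets us peel off linear factors instead.\<close>

lemma alg_closed_coprime_dvd_mult_cancel:
  fixes f g h :: "'a::alg_closed_field poly"
  assumes "coprime f g" "f \<noteq> 0" "f dvd h * g"
  shows "f dvd h"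
  using assms
proof (induction "degree f" arbitrary: f h rule: less_induct)
  case less
  show ?case
  proof (cases "degree f = 0")
    case True
    with less.prems(2) have "is_unit f"
      by (simp add: is_unit_iff_degree)
    then show ?thesis
      by (rule unit_imp_dvd)
  next
    case False
    then obtain x where x: "poly f x = 0"
      using alg_closed_imp_poly_has_root by blast
    then obtain f1 where f1: "f = [:-x, 1:] * f1"
      by (auto simp: poly_eq_0_iff_dvd elim: dvdE)
    have "poly g x \<noteq> 0"
      using coprime_poly_0[OF less.prems(1), of x] x by simp
    moreover obtain k where "h * g = f * k"
      using less.prems(3) by (elim dvdE)
    then have "poly (h * g) x = 0"
      using x by simp
    ultimately have "poly h x = 0"
      by simp
    then obtain h1 where h1: "h = [:-x, 1:] * h1"
      by (auto simp: poly_eq_0_iff_dvd elim: dvdE)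
    have "f1 \<noteq> 0"
      using f1 less.prems(2) by auto
    then have "degree f1 < degree f"
      unfolding f1 by (subst degree_mult_eq) auto
    moreover have "coprime f1 g"
    proof (rule coprimeI)
      fix c assume "c dvd f1" "c dvd g"
      then show "is_unit c"
        using coprime_common_divisor[OF less.prems(1)] f1 by (meson dvd_mult)
    qed
    moreover have "[:-x, 1:] * f1 dvd [:-x, 1:] * (h1 * g)"
      using less.prems(3) unfolding f1 h1 by (simp only: mult.assoc)
    then have "f1 dvd h1 * g"
      using dvd_mult_cancel_left[of "[:-x, 1:]" f1 "h1 * g"] by simp
    ultimately have "f1 dvd h1"
      using less.hyps \<open>f1 \<noteq> 0\<close> by blast
    then show ?thesis
      unfolding f1 h1 by (rule mult_dvd_mono[OF dvd_refl])
  qed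
qed

lemma alg_closed_poly_single_root:
  fixes p :: "'a::alg_closed_field poly"
  assumes "p \<noteq> 0" "\<And>x. poly p x = 0 \<Longrightarrow> x = x0"
  shows "p = smult (lead_coeff p) ([:-x0, 1:] ^ degree p)"
proof -
  obtain A where A: "size A = degree p" "p = smult (lead_coeff p) (\<Prod>x\<in>#A. [:-x, 1:])"
    using alg_closed_imp_factorization[OF assms(1)] by blast
  have "set_mset A \<subseteq> {x0}"
  proof
    fix x assume "x \<in># A"
    then have "[:-x, 1:] dvd p"
      by (subst A(2)) (intro dvd_smult dvd_prod_mset, simp)
    then show "x \<in> {x0}"
      using assms(2) by (simp add: poly_eq_0_iff_dvd)
  qed
  then have "A = replicate_mset (degree p) x0"
    using set_mset_subset_singletonD A(1) by metis
  with A(2) show ?thesis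
    by simp
qed

lemma linear_mult_pderiv_power:
  fixes x0 :: "'a::idom"
  shows "[:-x0, 1:] * pderiv ([:-x0, 1:] ^ m) = smult (of_nat m) ([:-x0, 1:] ^ m)"
proof (cases m)
  case (Suc j)
  have "p * (smult c (p ^ j) * 1) = smult c (p ^ Suc j)" for p :: "'a poly" and c
    by (simp add: algebra_simps)
  moreover have "pderiv [:-x0, 1:] = 1"
    by (simp add: pderiv_pCons)
  ultimately show ?thesis
    unfolding Suc pderiv_power_Suc by simp
qed simp

definition wronskian :: "'a::idom poly \<Rightarrow> 'a poly \<Rightarrow> 'a poly" where
  "wronskian f g = pderiv f * g - f * pderiv g"

lemma pderiv_wronskian:
  fixes f g :: "'a::idom poly"
  shows "pderiv (wronskian f g) = pderiv (pderiv f) * g - f * pderiv (pderiv g)"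
  unfolding wronskian_def pderiv_diff pderiv_mult by (simp add: algebra_simps)

lemma wronskian_top_coeffs:
  fixes f g :: "'a::field poly"
  assumes f: "degree f \<le> Suc (Suc k)" and g: "degree g \<le> Suc (Suc k)"
  shows degree_wronskian_le: "degree (wronskian f g) \<le> 2 * k + 2"
    and coeff_wronskian_top: "coeff (wronskian f g) (2 * k + 2) =
      coeff f (Suc (Suc k)) * coeff g (Suc k) - coeff f (Suc k) * coeff g (Suc (Suc k))"
proof -
  have f': "degree (pderiv f) \<le> Suc k" and g': "degree (pderiv g) \<le> Suc k"
    using f g degree_pderiv_le[of f] degree_pderiv_le[of g] by simp_all
  have "degree (wronskian f g) \<le> Suc (2 * k + 2)"
    unfolding wronskian_def
    by (rule degree_diff_le; rule order.trans[OF degree_mult_le]) (use f g f' g' in auto)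
  moreover have "coeff (wronskian f g) (Suc k + Suc (Suc k)) = 0"
    using coeff_mult_at_degree_bounds[OF f' g] coeff_mult_at_degree_bounds[OF f g']
    by (simp add: wronskian_def coeff_pderiv algebra_simps)
  then have "coeff (wronskian f g) (Suc (2 * k + 2)) = 0"
    by (simp add: mult_2)
  ultimately show "degree (wronskian f g) \<le> 2 * k + 2"
    by (rule degree_le_if_coeff_Suc_eq_0)
  have "coeff (wronskian f g) (Suc (k + Suc k)) =
      coeff f (Suc (Suc k)) * coeff g (Suc k) - coeff f (Suc k) * coeff g (Suc (Suc k))"
    using coeff_mult_below_degree_bounds[OF f' g] coeff_mult_below_degree_bounds[OF f g']
    by (simp add: wronskian_def coeff_pderiv algebra_simps)
  then show "coeff (wronskian f g) (2 * k + 2) =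
      coeff f (Suc (Suc k)) * coeff g (Suc k) - coeff f (Suc k) * coeff g (Suc (Suc k))"
    by (simp add: mult_2)
qed

lemma crit_at_quot_iff:
  fixes N D :: "'a::field poly"
  shows "crit_at_quot N D x \<longleftrightarrow> (poly N x \<noteq> 0 \<or> poly D x \<noteq> 0) \<and> poly (wronskian N D) x = 0"
proof
  assume "crit_at_quot N D x"
  then obtain a b c d where det: "flt a b c d"
    and Q: "poly (smult c N + smult d D) x \<noteq> 0"
    and W: "poly (pderiv (smult a N + smult b D)) x * poly (smult c N + smult d D) x
       - poly (smult a N + smult b D) x * poly (pderiv (smult c N + smult d D)) x = 0"
    unfolding crit_at_quot_def Let_def by blast
  \<comment> \<open>Composing with the Moebius map multiplies the Wronskian by its determinant.\<close>
  have "poly (pderiv (smult a N + smult b D)) x * poly (smult c N + smult d D) x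
       - poly (smult a N + smult b D) x * poly (pderiv (smult c N + smult d D)) x
     = (a * d - b * c) * poly (wronskian N D) x"
    by (simp add: wronskian_def pderiv_add pderiv_smult algebra_simps)
  with W det have "poly (wronskian N D) x = 0"
    by (simp add: flt_def)
  with Q show "(poly N x \<noteq> 0 \<or> poly D x \<noteq> 0) \<and> poly (wronskian N D) x = 0"
    by auto
next
  assume h: "(poly N x \<noteq> 0 \<or> poly D x \<noteq> 0) \<and> poly (wronskian N D) x = 0"
  then have W: "poly (pderiv N) x * poly D x - poly N x * poly (pderiv D) x = 0"
    by (simp add: wronskian_def)
  show "crit_at_quot N D x"
  proof (cases "poly D x = 0")
    case True
    with h W show ?thesis
      unfolding crit_at_quot_def Let_def
      by (intro exI[of _ 0] exI[of _ 1] exI[of _ 1] exI[of _ 0]) (simp add: flt_def)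
  next
    case False
    with W show ?thesis
      unfolding crit_at_quot_def Let_def
      by (intro exI[of _ 1] exI[of _ 0] exI[of _ 0] exI[of _ 1]) (simp add: flt_def)
  qed
qed

lemma critical_point_Some_iff:
  fixes f g :: "'a::field poly"
  assumes "coprime f g"
  shows "critical_point f g (Some x) \<longleftrightarrow> poly (wronskian f g) x = 0"
  using coprime_poly_0[OF assms, of x] by (simp add: critical_point_def crit_at_quot_iff)

lemma coeff_rev_poly:
  assumes "k \<le> n"
  shows "coeff (rev_poly n p) k = coeff p (n - k)"
proof -
  have "coeff (rev_poly n p) k = (\<Sum>i\<le>n. if i = n - k then coeff p i else 0)"
    unfolding rev_poly_def coeff_sum coeff_monom
    by (rule sum.cong) (use assms in auto)
  also have "\<dots> = coeff p (n - k)"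
    using assms by (simp add: sum.delta)
  finally show ?thesis .
qed

lemma coeff_rat_degree_nonzero:
  fixes f g :: "'a::field poly"
  assumes "g \<noteq> 0"
  shows "coeff f (rat_degree f g) \<noteq> 0 \<or> coeff g (rat_degree f g) \<noteq> 0"
  using assms by (cases "f = 0") (auto simp: rat_degree_def max_def)

lemma critical_point_None_iff:
  fixes f g :: "'a::field poly"
  assumes "g \<noteq> 0" "rat_degree f g = Suc k"
  shows "critical_point f g None \<longleftrightarrow>
    coeff f k * coeff g (Suc k) - coeff f (Suc k) * coeff g k = 0"
proof -
  have coeff_0: "coeff (rev_poly (Suc k) p) 0 = coeff p (Suc k)" for p :: "'a poly"
    using coeff_rev_poly[of 0 "Suc k" p] by simp
  have coeff_1: "coeff (rev_poly (Suc k) p) (Suc 0) = coeff p k" for p :: "'a poly"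
    using coeff_rev_poly[of "Suc 0" "Suc k" p] by simp
  have "poly (rev_poly (Suc k) f) 0 \<noteq> 0 \<or> poly (rev_poly (Suc k) g) 0 \<noteq> 0"
    using coeff_rat_degree_nonzero[OF assms(1), of f] assms(2) by (simp add: poly_0_coeff_0 coeff_0)
  moreover have "poly (wronskian (rev_poly (Suc k) f) (rev_poly (Suc k) g)) 0
      = coeff f k * coeff g (Suc k) - coeff f (Suc k) * coeff g k"
    by (simp add: wronskian_def poly_0_coeff_0 coeff_mult_0 coeff_pderiv coeff_0 coeff_1)
  ultimately show ?thesis
    using assms(2) by (simp add: critical_point_def crit_at_quot_iff)
qed

lemma critical_point_None_iff_wronskian:
  fixes f g :: "'a::field poly"
  assumes "g \<noteq> 0" "rat_degree f g = Suc (Suc k)"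
  shows "critical_point f g None \<longleftrightarrow> coeff (wronskian f g) (2 * k + 2) = 0"
proof -
  have "degree f \<le> Suc (Suc k)" "degree g \<le> Suc (Suc k)"
    using assms(2) by (auto simp: rat_degree_def)
  from coeff_wronskian_top[OF this] critical_point_None_iff[OF assms] show ?thesis
    by (auto simp: algebra_simps)
qed

lemma coprime_cross_mult_eq_0:
  fixes f g p q :: "'a::alg_closed_field poly"
  assumes "coprime f g" "p * g = f * q" "degree p < degree f"
  shows "p = 0 \<and> q = 0"
proof -
  have "f \<noteq> 0"
    using assms(3) by auto
  moreover have "f dvd p * g"
    unfolding assms(2) by simp
  ultimately have "f dvd p"
    using alg_closed_coprime_dvd_mult_cancel[OF assms(1)] by blast
  with assms(3) have "p = 0"
    using dvd_imp_degree_le[of f p] by linarith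
  with \<open>f \<noteq> 0\<close> show ?thesis
    using assms(2) by simp
qed

lemma coprime_cross_mult_degree_lowering:
  fixes f g :: "'a::alg_closed_field poly" and T :: "'a poly \<Rightarrow> 'a poly"
  assumes "coprime f g" "T f * g = f * T g"
    and "max (degree f) (degree g) = n"
    and "\<And>h. degree h \<le> n \<Longrightarrow> degree (T h) < n"
  shows "T f = 0 \<and> T g = 0"
proof (cases "degree f = n")
  case True
  then have "degree (T f) < degree f"
    using assms(3,4) by (simp add: max_def)
  with assms(1,2) show ?thesis
    by (rule coprime_cross_mult_eq_0)
next
  case False
  then have "degree g = n" "degree f \<le> n"
    using assms(3) by (auto simp: max_def split: if_splits)
  then have "degree (T g) < degree g"
    using assms(4) by simp
  moreover have "coprime g f" "T g * f = g * T f"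
    using assms(1,2) by (simp_all add: coprime_commute ac_simps)
  ultimately show ?thesis
    using coprime_cross_mult_eq_0[of g f "T g" "T f"] by blast
qed

lemma pderiv_pderiv_eq_0_coeff:
  fixes h :: "'a::idom poly"
  assumes "pderiv (pderiv h) = 0"
  shows "of_nat n * (of_nat n - 1) * coeff h n = 0"
proof (cases n)
  case (Suc m)
  show ?thesis
  proof (cases m)
    case (Suc k)
    have "coeff (pderiv (pderiv h)) k = of_nat (Suc k) * (of_nat (Suc (Suc k)) * coeff h (Suc (Suc k)))"
      by (simp add: coeff_pderiv)
    with assms show ?thesis
      using \<open>n = Suc m\<close> Suc by (simp add: algebra_simps)
  qed (use Suc in simp)
qed simp

lemma no_finite_critical_point_imp_degree:
  fixes f g :: "'a::alg_closed_field poly"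
  assumes "coprime f g" "g \<noteq> 0" "\<And>x. \<not> critical_point f g (Some x)"
  shows "of_nat (rat_degree f g) * (of_nat (rat_degree f g) - 1) = (0::'a)"
proof (cases "rat_degree f g = 0")
  case False
  let ?n = "rat_degree f g"
  have "degree (wronskian f g) = 0"
    using alg_closed_imp_poly_has_root[of "wronskian f g"] assms(3)
    by (auto simp: critical_point_Some_iff[OF assms(1)])
  then have "pderiv (wronskian f g) = 0"
    by (auto elim: degree_eq_zeroE)
  then have "pderiv (pderiv f) * g = f * pderiv (pderiv g)"
    by (simp add: pderiv_wronskian)
  then have "pderiv (pderiv f) = 0 \<and> pderiv (pderiv g) = 0"
  proof (rule coprime_cross_mult_degree_lowering[OF assms(1), where T = "\<lambda>h. pderiv (pderiv h)"])
    show "max (degree f) (degree g) = ?n"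
      by (simp add: rat_degree_def)
    show "degree (pderiv (pderiv h)) < ?n" if "degree h \<le> ?n" for h :: "'a poly"
      using that False degree_pderiv_le[of h] degree_pderiv_le[of "pderiv h"] by linarith
  qed
  then show ?thesis
    using pderiv_pderiv_eq_0_coeff[of f ?n] pderiv_pderiv_eq_0_coeff[of g ?n]
      coeff_rat_degree_nonzero[OF assms(2), of f]
    by auto
qed simp

text \<open>A Cauchy-Euler operator: it is diagonal in the basis \<open>(z - x\<^sub>0)^j\<close>, with eigenvalue
  \<open>(j - a)(j - a + 1)\<close>.\<close>

definition euler_op :: "'a::field \<Rightarrow> 'a \<Rightarrow> 'a poly \<Rightarrow> 'a poly" where
  "euler_op x0 a h = [:-x0, 1:] ^ 2 * pderiv (pderiv h)
     - smult (2 * (a - 1)) ([:-x0, 1:] * pderiv h) + smult (a * (a - 1)) h"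

lemma euler_op_cross_diff:
  fixes f g :: "'a::field poly"
  shows "euler_op x0 a f * g - f * euler_op x0 a g =
    [:-x0, 1:] * ([:-x0, 1:] * pderiv (wronskian f g) - smult (2 * (a - 1)) (wronskian f g))"
proof -
  have ring_identity:
    "(L ^ 2 * f2 - smult c (L * f1) + smult b f) * g - f * (L ^ 2 * g2 - smult c (L * g1) + smult b g)
      = L * (L * (f2 * g - f * g2) - smult c (f1 * g - f * g1))"
    for L f1 f2 g1 g2 :: "'a poly" and b c :: 'a
    by (simp add: power2_eq_square algebra_simps smult_add_right smult_diff_right)
  show ?thesis
    unfolding euler_op_def pderiv_wronskian unfolding wronskian_def by (rule ring_identity)
qed

lemma poly_euler_op_center: "poly (euler_op x0 a h) x0 = a * (a - 1) * poly h x0"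
  by (simp add: euler_op_def)

lemma degree_euler_op_less:
  fixes h :: "'a::field poly"
  assumes h: "degree h \<le> Suc (Suc k)"
  shows "degree (euler_op x0 (of_nat (Suc (Suc k))) h) < Suc (Suc k)"
proof -
  let ?L = "[:-x0, 1:]" and ?a = "of_nat (Suc (Suc k)) :: 'a"
  have h': "degree (pderiv h) \<le> Suc k" and h'': "degree (pderiv (pderiv h)) \<le> k"
    using h degree_pderiv_le[of h] degree_pderiv_le[of "pderiv h"] by simp_all
  have L: "degree ?L \<le> 1" and L2: "degree (?L ^ 2) \<le> 2"
    by (simp_all add: degree_linear_power)
  have "coeff (?L ^ 2) 2 = 1"
    using lead_coeff_power[of ?L 2] degree_linear_power[of "-x0" 2] by simp
  have "degree (euler_op x0 ?a h) \<le> Suc (Suc k)"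
    unfolding euler_op_def
  proof (intro degree_add_le degree_diff_le order.trans[OF degree_smult_le])
    show "degree (?L ^ 2 * pderiv (pderiv h)) \<le> Suc (Suc k)"
      using degree_mult_le[of "?L ^ 2" "pderiv (pderiv h)"] L2 h'' by linarith
    show "degree (?L * pderiv h) \<le> Suc (Suc k)"
      using degree_mult_le[of ?L "pderiv h"] L h' by linarith
  qed (use h in simp)
  moreover have "coeff (euler_op x0 ?a h) (Suc (Suc k)) = 0"
  proof -
    have "coeff (?L ^ 2 * pderiv (pderiv h)) (2 + k) = coeff (?L ^ 2) 2 * coeff (pderiv (pderiv h)) k"
      using L2 h'' by (rule coeff_mult_at_degree_bounds)
    then have c2: "coeff (?L ^ 2 * pderiv (pderiv h)) (Suc (Suc k))
        = of_nat (Suc k) * of_nat (Suc (Suc k)) * coeff h (Suc (Suc k))"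
      using \<open>coeff (?L ^ 2) 2 = 1\<close> by (simp add: coeff_pderiv)
    have "coeff (?L * pderiv h) (1 + Suc k) = coeff ?L 1 * coeff (pderiv h) (Suc k)"
      using L h' by (rule coeff_mult_at_degree_bounds)
    then have c1: "coeff (?L * pderiv h) (Suc (Suc k)) = of_nat (Suc (Suc k)) * coeff h (Suc (Suc k))"
      by (simp add: coeff_pderiv)
    show ?thesis
      unfolding euler_op_def coeff_add coeff_diff coeff_smult c1 c2
      by (simp add: algebra_simps)
  qed
  ultimately show ?thesis
    using degree_le_if_coeff_Suc_eq_0 by (metis less_Suc_eq_le)
qed

lemma euler_op_eq_0:
  fixes f g :: "'a::alg_closed_field poly"
  assumes "coprime f g" and n: "max (degree f) (degree g) = Suc (Suc k)"
    and W: "[:-x0, 1:] * pderiv (wronskian f g) = smult (of_nat (2 * k + 2)) (wronskian f g)"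
  shows "euler_op x0 (of_nat (Suc (Suc k))) f = 0 \<and> euler_op x0 (of_nat (Suc (Suc k))) g = 0"
proof (rule coprime_cross_mult_degree_lowering[OF assms(1) _ n])
  have "2 * (of_nat (Suc (Suc k)) - 1) = (of_nat (2 * k + 2) :: 'a)"
    by simp
  with W show "euler_op x0 (of_nat (Suc (Suc k))) f * g = f * euler_op x0 (of_nat (Suc (Suc k))) g"
    using euler_op_cross_diff[of x0 "of_nat (Suc (Suc k))" f g] by simp
qed (rule degree_euler_op_less)

lemma unique_finite_critical_point_imp_degree:
  fixes f g :: "'a::alg_closed_field poly"
  assumes cop: "coprime f g" and "g \<noteq> 0"
    and Some: "\<And>y. critical_point f g (Some y) \<longleftrightarrow> y = x0"
    and None: "\<not> critical_point f g None"
  shows "of_nat (rat_degree f g) * (of_nat (rat_degree f g) - 1) = (0::'a)"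
proof (cases "rat_degree f g < 2")
  case True
  then show ?thesis
    by (cases "rat_degree f g") auto
next
  case False
  then obtain k where n: "rat_degree f g = Suc (Suc k)"
    by (metis add_2_eq_Suc le_Suc_ex not_less)
  let ?W = "wronskian f g"
  have "coeff ?W (2 * k + 2) \<noteq> 0"
    using None critical_point_None_iff_wronskian[OF \<open>g \<noteq> 0\<close> n] by simp
  moreover have "degree ?W \<le> 2 * k + 2"
    using n by (intro degree_wronskian_le) (auto simp: rat_degree_def)
  ultimately have "degree ?W = 2 * k + 2" "?W \<noteq> 0"
    using le_degree by (auto intro: antisym)
  then obtain c where W: "?W = smult c ([:-x0, 1:] ^ (2 * k + 2))"
    using alg_closed_poly_single_root[of ?W x0] Some critical_point_Some_iff[OF cop] by auto
  have "[:-x0, 1:] * pderiv ?W = smult c ([:-x0, 1:] * pderiv ([:-x0, 1:] ^ (2 * k + 2)))"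
    unfolding W by (simp only: pderiv_smult mult_smult_right)
  also have "\<dots> = smult (of_nat (2 * k + 2)) ?W"
    unfolding W linear_mult_pderiv_power by (simp add: mult.commute)
  finally have "euler_op x0 (of_nat (Suc (Suc k))) f = 0 \<and> euler_op x0 (of_nat (Suc (Suc k))) g = 0"
    using euler_op_eq_0[OF cop] n by (simp add: rat_degree_def)
  then have "of_nat (Suc (Suc k)) * (of_nat (Suc (Suc k)) - 1) * poly h x0 = (0::'a)" if "h \<in> {f, g}" for h
    using that poly_euler_op_center[of x0 "of_nat (Suc (Suc k))" h] by auto
  with coprime_poly_0[OF cop, of x0] n show ?thesis
    by auto
qed

theorem corollary1p3:
  fixes f g :: "'a::alg_closed_field poly"
  assumes "CHAR('a) > 0"
    and "g \<noteq> 0" and "coprime f g"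
    and "unicritical f g"
  shows "rat_degree f g mod CHAR('a) = 0 \<or> rat_degree f g mod CHAR('a) = 1"
proof -
  obtain P where P: "critical_point f g P" and unique: "\<And>Q. critical_point f g Q \<Longrightarrow> Q = P"
    using assms(4) unfolding unicritical_def by blast
  have "of_nat (rat_degree f g) * (of_nat (rat_degree f g) - 1) = (0::'a)"
  proof (cases P)
    case None
    with unique show ?thesis
      by (intro no_finite_critical_point_imp_degree[OF assms(3,2)]) blast
  next
    case (Some x0)
    with P unique show ?thesis
      by (intro unique_finite_critical_point_imp_degree[OF assms(3,2)]) blast+
  qed
  then show ?thesis
    by (rule mod_CHAR_eq_0_or_1)
qed

end
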